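(* Let $A \in \mathbb{R}^{m\times n}$ and $W \in \mathbb{R}^{q\times m}$ be matrices, and let $B^\sharp\colon \mathbb{R}^m\to\mathbb{R}^n$ be a fixed measurable map. Let $X$ be a random vector in $\mathbb{R}^n$ and $\Xi, N$ random vectors in $\mathbb{R}^m$, all with finite second moments, such that the triples $(X,\Xi,N)$ and $(X,N,\Xi)$ have the same joint distribution (for instance, $\Xi$ and $N$ i.i.d. and independent of $X$). Set $Y = AX + \Xi$ and $Z = Y + N$. Let $\mathcal{F}$ be the set of measurable functions $f\colon\mathbb{R}^n\to\mathbb{R}^n$ with $\mathbb{E}\|WA[f(B^\sharp(Z))]\|_2^2<\infty$. Then $$\operatorname*{argmin}_{f\in\mathcal{F}} \mathbb{E}\,\big\|WA[f\circ B^\sharp(Z)] - WAX\big\|_2^2 \;=\; \operatorname*{argmin}_{f\in\mathcal{F}} \mathbb{E}\,\big\|WA[f\circ B^\sharp(Z)] - W(2Y-Z)\big\|_2^2 .$$ More precisely, for every $f\in\mathcal{F}$, $$\mathbb{E}\|WA[f\circ B^\sharp(Z)] - W(2Y-Z)\|_2^2 = \mathbb{E}\|WA[f\circ B^\sharp(Z)] - WAX\|_2^2 - \mathbb{E}\|WAX\|_2^2 + \mathbb{E}\|W(2Y-Z)\|_2^2 .$$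
   Context: Model: $Y = AX+\Xi$ is the noisy measurement of the unknown image $X$ under the linear forward operator $A$ with additive noise $\Xi$; $Z = Y+N$ is "noisier" data obtained by adding an independent copy-type noise $N$. $\|\cdot\|_2$ is the Euclidean norm. *)

theory Defs
  imports "HOL-Probability.Probability"
begin

definition argmin_on :: "'a set \<Rightarrow> ('a \<Rightarrow> real) \<Rightarrow> 'a set" where
  "argmin_on S J = {f \<in> S. \<forall>g\<in>S. J f \<le> J g}"

end

theory Submission
  imports Defs
begin

text \<open>
  Write \<open>g = WA f(B\<^sup>\<sharp>(Z))\<close>. Since \<open>W(2Y - Z) = WAX + W\<Xi> - WN\<close>, expanding the square gives
  \<open>\<parallel>g - W(2Y - Z)\<parallel>\<^sup>2 = \<parallel>g - WAX\<parallel>\<^sup>2 - \<parallel>WAX\<parallel>\<^sup>2 + \<parallel>W(2Y - Z)\<parallel>\<^sup>2 - 2\<langle>g, W\<Xi>\<rangle> + 2\<langle>g, WN\<rangle>\<close>.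
  The noisier observation \<open>Z = AX + \<Xi> + N\<close> is symmetric in \<open>\<Xi>\<close> and \<open>N\<close>, so exchangeability of
  \<open>(X, \<Xi>, N)\<close> and \<open>(X, N, \<Xi>)\<close> makes the two cross terms equal in expectation. Hence the two
  risks differ by a constant independent of \<open>f\<close> and have the same minimisers.
\<close>

lemma borel_measurable_matrix_vector_mult [measurable (raw)]:
  fixes A :: "real^'n^'m"
  assumes "f \<in> borel_measurable M"
  shows "(\<lambda>x. A *v f x) \<in> borel_measurable M"
proof -
  have "(*v) A \<in> borel_measurable borel"
    by (intro borel_measurable_continuous_onI linear_continuous_on) simp
  from measurable_compose[OF assms this] show ?thesis
    by (simp add: o_def)
qed

lemma square_integrable_matrix_vector_mult:
  fixes W :: "real^'m^'q" and u :: "'w \<Rightarrow> real^'m"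
  assumes [measurable]: "u \<in> borel_measurable M"
    and "integrable M (\<lambda>\<omega>. (norm (u \<omega>))\<^sup>2)"
  shows "integrable M (\<lambda>\<omega>. (norm (W *v u \<omega>))\<^sup>2)"
proof -
  obtain K where "\<And>x. norm (W *v x) \<le> norm x * K"
    using bounded_linear.pos_bounded[OF matrix_vector_mul_bounded_linear[of W]] by blast
  then have bound: "(norm (W *v x))\<^sup>2 \<le> K\<^sup>2 * (norm x)\<^sup>2" for x
    by (metis norm_ge_zero power_mono power_mult_distrib mult.commute)
  show ?thesis
  proof (rule Bochner_Integration.integrable_bound)
    show "integrable M (\<lambda>\<omega>. K\<^sup>2 * (norm (u \<omega>))\<^sup>2)"
      using assms(2) by simp
    show "AE \<omega> in M. norm ((norm (W *v u \<omega>))\<^sup>2) \<le> norm (K\<^sup>2 * (norm (u \<omega>))\<^sup>2)"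
      using bound by (simp add: abs_mult)
  qed measurable
qed

lemma integrable_inner_of_square_integrable:
  fixes u v :: "'w \<Rightarrow> 'a::euclidean_space"
  assumes [measurable]: "u \<in> borel_measurable M" "v \<in> borel_measurable M"
    and "integrable M (\<lambda>\<omega>. (norm (u \<omega>))\<^sup>2)" "integrable M (\<lambda>\<omega>. (norm (v \<omega>))\<^sup>2)"
  shows "integrable M (\<lambda>\<omega>. u \<omega> \<bullet> v \<omega>)"
proof (rule Bochner_Integration.integrable_bound)
  show "integrable M (\<lambda>\<omega>. (norm (u \<omega>))\<^sup>2 + (norm (v \<omega>))\<^sup>2)"
    using assms(3,4) by simp
  have "\<bar>x \<bullet> y\<bar> \<le> (norm x)\<^sup>2 + (norm y)\<^sup>2" for x y :: 'a
  proof -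
    have "\<bar>x \<bullet> y\<bar> \<le> norm x * norm y"
      by (rule Cauchy_Schwarz_ineq2)
    also have "\<dots> \<le> (norm x)\<^sup>2 + (norm y)\<^sup>2"
      using sum_squares_bound[of "norm x" "norm y"] mult_nonneg_nonneg[OF norm_ge_zero norm_ge_zero, of x y]
      by linarith
    finally show ?thesis .
  qed
  then show "AE \<omega> in M. norm (u \<omega> \<bullet> v \<omega>) \<le> norm ((norm (u \<omega>))\<^sup>2 + (norm (v \<omega>))\<^sup>2)"
    by simp
qed measurable

lemma square_integrable_add:
  fixes u v :: "'w \<Rightarrow> 'a::euclidean_space"
  assumes "u \<in> borel_measurable M" "v \<in> borel_measurable M"
    and "integrable M (\<lambda>\<omega>. (norm (u \<omega>))\<^sup>2)" "integrable M (\<lambda>\<omega>. (norm (v \<omega>))\<^sup>2)"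
  shows "integrable M (\<lambda>\<omega>. (norm (u \<omega> + v \<omega>))\<^sup>2)"
proof -
  have "integrable M (\<lambda>\<omega>. (norm (u \<omega>))\<^sup>2 + 2 * (u \<omega> \<bullet> v \<omega>) + (norm (v \<omega>))\<^sup>2)"
    using assms(3,4) integrable_inner_of_square_integrable[OF assms] by simp
  then show ?thesis
    by (simp add: power2_norm_eq_inner inner_add_left inner_add_right inner_commute
        algebra_simps)
qed

lemma square_integrable_diff:
  fixes u v :: "'w \<Rightarrow> 'a::euclidean_space"
  assumes "u \<in> borel_measurable M" "v \<in> borel_measurable M"
    and "integrable M (\<lambda>\<omega>. (norm (u \<omega>))\<^sup>2)" "integrable M (\<lambda>\<omega>. (norm (v \<omega>))\<^sup>2)"
  shows "integrable M (\<lambda>\<omega>. (norm (u \<omega> - v \<omega>))\<^sup>2)"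
  using square_integrable_add[of u M "\<lambda>\<omega>. - v \<omega>"] assms by simp

lemma norm_diff_square_expand:
  fixes g a p q :: "'a::real_inner"
  shows "(norm (g - (a + p - q)))\<^sup>2
       = (norm (g - a))\<^sup>2 - (norm a)\<^sup>2 + (norm (a + p - q))\<^sup>2 - 2 * (g \<bullet> p) + 2 * (g \<bullet> q)"
  by (simp add: power2_norm_eq_inner inner_diff_left inner_diff_right inner_add_left
      inner_add_right inner_commute algebra_simps)

lemma integral_norm_diff_square_shift:
  fixes g a p q :: "'w \<Rightarrow> 'a::euclidean_space"
  assumes [measurable]: "g \<in> borel_measurable M" "a \<in> borel_measurable M"
      "p \<in> borel_measurable M" "q \<in> borel_measurable M"
    and ig: "integrable M (\<lambda>\<omega>. (norm (g \<omega>))\<^sup>2)" and ia: "integrable M (\<lambda>\<omega>. (norm (a \<omega>))\<^sup>2)"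
    and ip: "integrable M (\<lambda>\<omega>. (norm (p \<omega>))\<^sup>2)" and iq: "integrable M (\<lambda>\<omega>. (norm (q \<omega>))\<^sup>2)"
    and cross: "(\<integral>\<omega>. g \<omega> \<bullet> p \<omega> \<partial>M) = (\<integral>\<omega>. g \<omega> \<bullet> q \<omega> \<partial>M)"
  shows "(\<integral>\<omega>. (norm (g \<omega> - (a \<omega> + p \<omega> - q \<omega>)))\<^sup>2 \<partial>M)
       = (\<integral>\<omega>. (norm (g \<omega> - a \<omega>))\<^sup>2 \<partial>M) - (\<integral>\<omega>. (norm (a \<omega>))\<^sup>2 \<partial>M)
         + (\<integral>\<omega>. (norm (a \<omega> + p \<omega> - q \<omega>))\<^sup>2 \<partial>M)"
proof -
  have "integrable M (\<lambda>\<omega>. (norm (a \<omega> + p \<omega>))\<^sup>2)"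
    using square_integrable_add[OF _ _ ia ip] by simp
  then have iapq: "integrable M (\<lambda>\<omega>. (norm (a \<omega> + p \<omega> - q \<omega>))\<^sup>2)"
    using square_integrable_diff[OF _ _ _ iq] by simp
  have "(\<integral>\<omega>. (norm (g \<omega> - (a \<omega> + p \<omega> - q \<omega>)))\<^sup>2 \<partial>M)
      = (\<integral>\<omega>. (norm (g \<omega> - a \<omega>))\<^sup>2 - (norm (a \<omega>))\<^sup>2 + (norm (a \<omega> + p \<omega> - q \<omega>))\<^sup>2
               - 2 * (g \<omega> \<bullet> p \<omega>) + 2 * (g \<omega> \<bullet> q \<omega>) \<partial>M)"
    by (simp only: norm_diff_square_expand)
  also have "\<dots> = (\<integral>\<omega>. (norm (g \<omega> - a \<omega>))\<^sup>2 \<partial>M) - (\<integral>\<omega>. (norm (a \<omega>))\<^sup>2 \<partial>M)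
      + (\<integral>\<omega>. (norm (a \<omega> + p \<omega> - q \<omega>))\<^sup>2 \<partial>M)
      - 2 * (\<integral>\<omega>. g \<omega> \<bullet> p \<omega> \<partial>M) + 2 * (\<integral>\<omega>. g \<omega> \<bullet> q \<omega> \<partial>M)"
    using square_integrable_diff[OF _ _ ig ia] ia iapq
      integrable_inner_of_square_integrable[OF _ _ ig ip]
      integrable_inner_of_square_integrable[OF _ _ ig iq]
    by simp
  finally show ?thesis
    using cross by simp
qed

lemma integral_eq_of_distr_eq:
  fixes \<phi> :: "'b \<Rightarrow> 'c::{banach, second_countable_topology}"
  assumes "distr M N T = distr M N T'"
    and "T \<in> measurable M N" "T' \<in> measurable M N" "\<phi> \<in> borel_measurable N"
  shows "(\<integral>\<omega>. \<phi> (T \<omega>) \<partial>M) = (\<integral>\<omega>. \<phi> (T' \<omega>) \<partial>M)"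
  using integral_distr[OF assms(2,4)] integral_distr[OF assms(3,4)] assms(1) by simp

lemma integral_inner_exchangeable_noise:
  fixes A :: "real^'n^'m" and X :: "'w \<Rightarrow> real^'n" and Xi Nz :: "'w \<Rightarrow> real^'m"
    and h V :: "real^'m \<Rightarrow> 'a::euclidean_space"
  assumes [measurable]: "X \<in> borel_measurable M" "Xi \<in> borel_measurable M" "Nz \<in> borel_measurable M"
      "h \<in> borel_measurable borel" "V \<in> borel_measurable borel"
    and exch: "distr M borel (\<lambda>\<omega>. (X \<omega>, Xi \<omega>, Nz \<omega>)) = distr M borel (\<lambda>\<omega>. (X \<omega>, Nz \<omega>, Xi \<omega>))"
  shows "(\<integral>\<omega>. h (A *v X \<omega> + Xi \<omega> + Nz \<omega>) \<bullet> V (Xi \<omega>) \<partial>M)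
       = (\<integral>\<omega>. h (A *v X \<omega> + Xi \<omega> + Nz \<omega>) \<bullet> V (Nz \<omega>) \<partial>M)"
proof -
  define \<phi> where "\<phi> r = h (A *v fst r + fst (snd r) + snd (snd r)) \<bullet> V (fst (snd r))"
    for r :: "(real^'n) \<times> (real^'m) \<times> (real^'m)"
  have "(\<lambda>\<omega>. (X \<omega>, Xi \<omega>, Nz \<omega>)) \<in> borel_measurable M"
    and "(\<lambda>\<omega>. (X \<omega>, Nz \<omega>, Xi \<omega>)) \<in> borel_measurable M"
    by (simp_all add: borel_measurable_Pair)
  moreover have "\<phi> \<in> borel_measurable borel"
    unfolding \<phi>_def borel_prod[symmetric] by measurable
  ultimately have "(\<integral>\<omega>. \<phi> (X \<omega>, Xi \<omega>, Nz \<omega>) \<partial>M) = (\<integral>\<omega>. \<phi> (X \<omega>, Nz \<omega>, Xi \<omega>) \<partial>M)"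
    by (rule integral_eq_of_distr_eq[OF exch])
  then show ?thesis
    by (simp add: \<phi>_def add.assoc add.commute[of "Xi _"])
qed

lemma argmin_on_cong_shift:
  assumes "\<And>f. f \<in> S \<Longrightarrow> J' f = J f - c + c'"
  shows "argmin_on S J = argmin_on S J'"
  using assms unfolding argmin_on_def by auto

theorem theorem1:
  fixes M :: "'w measure"
    and A :: "real^'n^'m" and W :: "real^'m^'q"
    and Bs :: "real^'m \<Rightarrow> real^'n"
    and X :: "'w \<Rightarrow> real^'n" and Xi Nz :: "'w \<Rightarrow> real^'m"
    and Y Z :: "'w \<Rightarrow> real^'m"
    and F :: "(real^'n \<Rightarrow> real^'n) set"
  assumes "prob_space M"
    and "Bs \<in> borel_measurable borel"
    and "X \<in> borel_measurable M" and "Xi \<in> borel_measurable M" and "Nz \<in> borel_measurable M"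
    and "integrable M (\<lambda>\<omega>. (norm (X \<omega>))\<^sup>2)"
    and "integrable M (\<lambda>\<omega>. (norm (Xi \<omega>))\<^sup>2)"
    and "integrable M (\<lambda>\<omega>. (norm (Nz \<omega>))\<^sup>2)"
    and "distr M borel (\<lambda>\<omega>. (X \<omega>, Xi \<omega>, Nz \<omega>)) = distr M borel (\<lambda>\<omega>. (X \<omega>, Nz \<omega>, Xi \<omega>))"
    and "Y = (\<lambda>\<omega>. A *v X \<omega> + Xi \<omega>)"
    and "Z = (\<lambda>\<omega>. Y \<omega> + Nz \<omega>)"
    and "F = {f. f \<in> borel_measurable borel \<and>
                integrable M (\<lambda>\<omega>. (norm (W *v (A *v f (Bs (Z \<omega>)))))\<^sup>2)}"
  shows "argmin_on F (\<lambda>f. \<integral>\<omega>. (norm (W *v (A *v f (Bs (Z \<omega>))) - W *v (A *v X \<omega>)))\<^sup>2 \<partial>M)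
       = argmin_on F (\<lambda>f. \<integral>\<omega>. (norm (W *v (A *v f (Bs (Z \<omega>))) - W *v (2 *\<^sub>R Y \<omega> - Z \<omega>)))\<^sup>2 \<partial>M)
     \<and> (\<forall>f\<in>F.
          (\<integral>\<omega>. (norm (W *v (A *v f (Bs (Z \<omega>))) - W *v (2 *\<^sub>R Y \<omega> - Z \<omega>)))\<^sup>2 \<partial>M)
        = (\<integral>\<omega>. (norm (W *v (A *v f (Bs (Z \<omega>))) - W *v (A *v X \<omega>)))\<^sup>2 \<partial>M)
          - (\<integral>\<omega>. (norm (W *v (A *v X \<omega>)))\<^sup>2 \<partial>M)
          + (\<integral>\<omega>. (norm (W *v (2 *\<^sub>R Y \<omega> - Z \<omega>)))\<^sup>2 \<partial>M))"
proof -
  note [measurable] = assms(2-5)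
  have Z_eq: "Z = (\<lambda>\<omega>. A *v X \<omega> + Xi \<omega> + Nz \<omega>)"
    using assms(10,11) by simp
  have W_target: "W *v (2 *\<^sub>R Y \<omega> - Z \<omega>) = W *v (A *v X \<omega>) + W *v Xi \<omega> - W *v Nz \<omega>" for \<omega>
    by (simp add: assms(10,11) scaleR_2 algebra_simps matrix_vector_right_distrib
        matrix_vector_mult_diff_distrib)
  have iWAX: "integrable M (\<lambda>\<omega>. (norm (W *v (A *v X \<omega>)))\<^sup>2)"
    by (intro square_integrable_matrix_vector_mult assms(6)) measurable
  have iWXi: "integrable M (\<lambda>\<omega>. (norm (W *v Xi \<omega>))\<^sup>2)"
    and iWNz: "integrable M (\<lambda>\<omega>. (norm (W *v Nz \<omega>))\<^sup>2)"
    by (intro square_integrable_matrix_vector_mult assms(4,5,7,8))+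
  have risk: "(\<integral>\<omega>. (norm (W *v (A *v f (Bs (Z \<omega>))) - W *v (2 *\<^sub>R Y \<omega> - Z \<omega>)))\<^sup>2 \<partial>M)
        = (\<integral>\<omega>. (norm (W *v (A *v f (Bs (Z \<omega>))) - W *v (A *v X \<omega>)))\<^sup>2 \<partial>M)
          - (\<integral>\<omega>. (norm (W *v (A *v X \<omega>)))\<^sup>2 \<partial>M)
          + (\<integral>\<omega>. (norm (W *v (2 *\<^sub>R Y \<omega> - Z \<omega>)))\<^sup>2 \<partial>M)" if "f \<in> F" for f
  proof -
    from that have [measurable]: "f \<in> borel_measurable borel"
      and ig: "integrable M (\<lambda>\<omega>. (norm (W *v (A *v f (Bs (Z \<omega>)))))\<^sup>2)"
      using assms(12) by auto
    have "(\<integral>\<omega>. (W *v (A *v f (Bs (Z \<omega>)))) \<bullet> (W *v Xi \<omega>) \<partial>M)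
        = (\<integral>\<omega>. (W *v (A *v f (Bs (Z \<omega>)))) \<bullet> (W *v Nz \<omega>) \<partial>M)"
      unfolding Z_eq by (rule integral_inner_exchangeable_noise[OF assms(3-5) _ _ assms(9)]) measurable
    from integral_norm_diff_square_shift[OF _ _ _ _ ig iWAX iWXi iWNz this]
    show ?thesis
      unfolding W_target by (simp add: Z_eq)
  qed
  show ?thesis
    by (intro conjI ballI argmin_on_cong_shift) (erule risk)+
qed

end
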